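(* Let $j\ge3$ and $n\ge j-2$ be integers. (i) If $n\ge 2j-2$, then there exists $\tilde\lambda\in(1/n,n)$ with the following properties: - $\lambda_{n,j}(\lambda)>1/n$ for all $\lambda\in(1/n,\tilde\lambda)$; - $\lambda_{n,j}(\lambda)=1/n$ for $\lambda\in\{1/n,\tilde\lambda\}$; - $\lambda_{n,j}(\lambda)<1/n$ for all $\lambda\in(\tilde\lambda,\infty]$. (ii) If $n\le 2j-3$, then $\lambda_{n,j}(\lambda)<1/n$ for all $\lambda\in(1/n,\infty]$.
   Context: For an integer $n\ge1$ let $f_n(x)=(1+x)^{n+1}/x$ for $x>0$. The function $f_n$ is strictly decreasing on $(0,1/n]$ and strictly increasing on $[1/n,\infty)$. Regular graph exponents (Schmidt–Summerer), defined algebraically. For $\lambda\in[1/n,\infty)$ let $\mu\in(0,1/n]$ be the unique solution of $f_n(\mu)=f_n(\lambda)$, and set $$\lambda_{n,j}(\lambda)=\lambda^{1-\frac{j-1}{n+1}}\mu^{\frac{j-1}{n+1}},\qquad 1\le j\le n+2 .$$ All ratios $\lambda_{n,j}/\lambda_{n,j+1}$ are equal. For $\lambda=\infty$ put $\lambda_{n,1}=\infty$, $\lambda_{n,2}=1$ and $\lambda_{n,j}=0$ for $3\le j\le n+2$. These are the exponents $\lambda_{n,j}$ of the regular graph in dimension $n$ with parameter $\lambda_n=\lambda$. They depend continuously on $\lambda$. *)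

theory Defs
  imports "HOL-Analysis.Analysis"
begin

definition fn :: "nat \<Rightarrow> real \<Rightarrow> real" where
  "fn n x = (1 + x) ^ (n + 1) / x"

definition mu_reg :: "nat \<Rightarrow> real \<Rightarrow> real" where
  "mu_reg n lam = (THE m. 0 < m \<and> m \<le> 1 / real n \<and> fn n m = fn n lam)"

definition lam_reg :: "nat \<Rightarrow> nat \<Rightarrow> real \<Rightarrow> real" where
  "lam_reg n j lam =
     lam powr (1 - (real j - 1) / (real n + 1)) * mu_reg n lam powr ((real j - 1) / (real n + 1))"

definition lam_reg_ext :: "nat \<Rightarrow> nat \<Rightarrow> ereal \<Rightarrow> ereal" where
  "lam_reg_ext n j L = (case L of
       ereal x \<Rightarrow> ereal (lam_reg n j x)
     | PInfty \<Rightarrow> (if j = 1 then \<infinity> else if j = 2 then 1 else 0)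
     | MInfty \<Rightarrow> undefined)"

end

theory Submission
  imports Defs
begin

text \<open>
  Let \<mu> be the partner of \<lambda> > 1/n, i.e. f_n(\<mu>) = f_n(\<lambda>), and put t = (1 + \<lambda>)/(1 + \<mu>) > 1.
  Then \<lambda> = t^(n+1) \<mu>, which gives \<lambda> = 1/G(t) with G(t) = \<Sum>_{k=1..n} t^-k, and
  \<lambda>_{n,j} = \<lambda> t^(1-j). So \<lambda>_{n,j} < 1/n iff t^(j-1) G(t) > n, and
  t^(j-1) G(t) - n = \<Sum>_k (t^(j-1-k) - 1) = (t - 1) A(t), where A is a sum of quotients
  (t^m - 1)/(t - 1). Each of these is nondecreasing in t, strictly so for m < 0, and
  A(1) = n(2j - 3 - n)/2. If n \<le> 2j - 3, then A > 0 on (1, \<infinity>). If n \<ge> 2j - 2, then A has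
  exactly one zero t0, and since \<lambda> = 1/G(t) increases with t, the sign of 1/n - \<lambda>_{n,j} is
  that of \<lambda> - 1/G(t0). Finally 1/G(t0) < n, because for \<lambda> = n one has t > n and hence
  \<lambda>_{n,j} \<le> n/t^2 < 1/n.
\<close>

section \<open>The function \<open>fn\<close> and the partner \<open>mu_reg\<close>\<close>

lemma fn_has_real_derivative:
  assumes "x > 0"
  shows "(fn n has_real_derivative (1 + x) ^ n * (real n * x - 1) / x\<^sup>2) (at x)"
proof -
  have "(fn n has_real_derivative (real (n + 1) * (1 + x) ^ n * x - (1 + x) ^ (n + 1)) / x\<^sup>2) (at x)"
    unfolding fn_def[abs_def] using assms
    by (auto intro!: derivative_eq_intros simp: power2_eq_square; cases n; auto simp: algebra_simps)
  moreover have "real (n + 1) * (1 + x) ^ n * x - (1 + x) ^ (n + 1) = (1 + x) ^ n * (real n * x - 1)"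
    by (simp add: algebra_simps)
  ultimately show ?thesis by simp
qed

lemma continuous_on_fn: "0 < a \<Longrightarrow> continuous_on {a..b} (fn n)"
  unfolding fn_def[abs_def] by (intro continuous_intros) auto

lemma fn_strict_decreasing:
  assumes "n \<ge> 1" "0 < a" "a < b" "b \<le> 1 / real n"
  shows "fn n b < fn n a"
proof (rule DERIV_neg_imp_decreasing_open[OF \<open>a < b\<close>])
  fix x assume x: "a < x" "x < b"
  have "real n * x < real n * (1 / real n)"
    using x assms by (intro mult_strict_left_mono) auto
  then have "real n * x - 1 < 0"
    using assms by simp
  then show "\<exists>y. DERIV (fn n) x :> y \<and> y < 0"
    using fn_has_real_derivative[of x n] x assms
    by (intro exI[of _ "(1 + x) ^ n * (real n * x - 1) / x\<^sup>2"]) (auto simp: mult_pos_neg divide_neg_pos)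
qed (use continuous_on_fn assms in auto)

lemma fn_strict_increasing:
  assumes "n \<ge> 1" "1 / real n \<le> a" "a < b"
  shows "fn n a < fn n b"
proof (rule DERIV_pos_imp_increasing_open[OF \<open>a < b\<close>])
  have "0 < 1 / real n"
    using assms(1) by simp
  then have "a > 0"
    using assms(2) by linarith
  then show "continuous_on {a..b} (fn n)"
    by (rule continuous_on_fn)
  fix x assume x: "a < x" "x < b"
  have "real n * (1 / real n) < real n * x"
    using x assms by (intro mult_strict_left_mono) auto
  then have "real n * x - 1 > 0"
    using assms by simp
  then show "\<exists>y. DERIV (fn n) x :> y \<and> y > 0"
    using fn_has_real_derivative[of x n] x \<open>a > 0\<close>
    by (intro exI[of _ "(1 + x) ^ n * (real n * x - 1) / x\<^sup>2"]) auto
qed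

lemma fn_ge_inverse:
  assumes "0 < x"
  shows "1 / x \<le> fn n x"
proof -
  have "1 \<le> (1 + x) ^ (n + 1)"
    using assms by (intro one_le_power) simp
  with assms show ?thesis
    unfolding fn_def by (simp add: divide_right_mono)
qed

lemma fn_eq_imp_eq:
  assumes "n \<ge> 1" "0 < a" "a \<le> 1 / real n" "0 < b" "b \<le> 1 / real n" "fn n a = fn n b"
  shows "a = b"
  using fn_strict_decreasing[OF assms(1,2) _ assms(5)] fn_strict_decreasing[OF assms(1,4) _ assms(3)] assms(6)
  by (cases a b rule: linorder_cases) auto

lemma mu_reg_eqI:
  assumes "n \<ge> 1" "0 < m" "m \<le> 1 / real n" "fn n m = fn n lam"
  shows "mu_reg n lam = m"
  unfolding mu_reg_def
  by (rule the_equality) (use assms fn_eq_imp_eq[OF assms(1)] in auto)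

lemma mu_reg_exists:
  assumes n: "n \<ge> 1" and lam: "1 / real n < lam"
  shows "\<exists>m. 0 < m \<and> m \<le> 1 / real n \<and> fn n m = fn n lam"
proof -
  have fn_less: "fn n (1 / real n) < fn n lam"
    using fn_strict_increasing[OF n _ lam] by simp
  define e where "e = 1 / (fn n lam + 1)"
  have "real n \<le> fn n (1 / real n)"
    using fn_ge_inverse[of "1 / real n" n] n by simp
  then have e: "0 < e" "e < 1 / real n"
    using fn_less n unfolding e_def by (auto intro!: divide_strict_left_mono)
  have "fn n lam \<le> fn n e"
    using fn_ge_inverse[OF \<open>0 < e\<close>, of n] unfolding e_def by simp
  then obtain m where "e \<le> m" "m \<le> 1 / real n" "fn n m = fn n lam"
    using IVT2'[of "fn n" "1 / real n" "fn n lam" e] fn_less e continuous_on_fn[OF \<open>0 < e\<close>] by auto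
  then show ?thesis
    using e by (intro exI[of _ m]) auto
qed

lemma mu_reg_bounds:
  assumes n: "n \<ge> 1" and lam: "1 / real n < lam"
  shows "0 < mu_reg n lam" "mu_reg n lam < 1 / real n" "fn n (mu_reg n lam) = fn n lam"
proof -
  obtain m where m: "0 < m" "m \<le> 1 / real n" "fn n m = fn n lam"
    using mu_reg_exists[OF assms] by blast
  then have "mu_reg n lam = m"
    by (rule mu_reg_eqI[OF n])
  moreover have "m \<noteq> 1 / real n"
    using m(3) fn_strict_increasing[OF n _ lam] by auto
  ultimately show "0 < mu_reg n lam" "mu_reg n lam < 1 / real n" "fn n (mu_reg n lam) = fn n lam"
    using m by auto
qed

lemma lam_reg_at_inverse_n:
  assumes "n \<ge> 1"
  shows "lam_reg n j (1 / real n) = 1 / real n"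
proof -
  have "mu_reg n (1 / real n) = 1 / real n"
    by (rule mu_reg_eqI) (use assms in auto)
  then show ?thesis
    using assms by (simp add: lam_reg_def powr_add[symmetric])
qed

section \<open>Parametrization by \<open>t = (1 + \<lambda>) / (1 + \<mu>)\<close>\<close>

definition recip_power_sum :: "nat \<Rightarrow> real \<Rightarrow> real" where
  "recip_power_sum n t = (\<Sum>k=1..n. (1 / t) ^ k)"

lemma recip_power_sum_one [simp]: "recip_power_sum n 1 = real n"
  by (simp add: recip_power_sum_def)

lemma recip_power_sum_pos: "0 < t \<Longrightarrow> 1 \<le> n \<Longrightarrow> 0 < recip_power_sum n t"
  unfolding recip_power_sum_def by (intro sum_pos) auto

lemma diff_one_mult_recip_power_sum:
  assumes "t \<noteq> 0"
  shows "(t - 1) * recip_power_sum n t = 1 - (1 / t) ^ n"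
proof (induction n)
  case (Suc n)
  have "(t - 1) * (1 / t) ^ Suc n = (1 / t) ^ n - (1 / t) ^ Suc n"
    using assms by (simp add: field_simps)
  with Suc show ?case
    by (simp add: recip_power_sum_def algebra_simps)
qed (simp add: recip_power_sum_def)

lemma recip_power_sum_gt_inverse:
  assumes "0 < t" "2 \<le> n"
  shows "1 / t < recip_power_sum n t"
proof -
  have "(\<Sum>k\<in>{1,2}. (1 / t) ^ k) \<le> recip_power_sum n t"
    unfolding recip_power_sum_def by (rule sum_mono2) (use assms in auto)
  moreover have "(\<Sum>k\<in>{1,2}. (1 / t) ^ k) = 1 / t + (1 / t) ^ 2"
    by simp
  moreover have "0 < (1 / t) ^ 2"
    using assms by simp
  ultimately show ?thesis
    by linarith
qed

lemma strict_mono_on_inverse_recip_power_sum: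
  assumes "1 \<le> n"
  shows "strict_mono_on {0<..} (\<lambda>t. 1 / recip_power_sum n t)"
proof (rule strict_mono_onI)
  fix s t :: real assume "s \<in> {0<..}" "s < t"
  then have "1 / t < 1 / s" "0 < s" "0 < t"
    by (auto simp: frac_less2)
  then have "recip_power_sum n t < recip_power_sum n s"
    unfolding recip_power_sum_def using assms by (intro sum_strict_mono power_strict_mono) auto
  then show "1 / recip_power_sum n s < 1 / recip_power_sum n t"
    using recip_power_sum_pos \<open>0 < s\<close> \<open>s < t\<close> assms by (intro frac_less2) auto
qed

lemma fn_eq_imp_power_ratio:
  assumes "0 < mu" "0 < lam" "fn n mu = fn n lam"
  shows "lam = ((1 + lam) / (1 + mu)) ^ (n + 1) * mu"
proof -
  define P Q where "P = (1 + mu) ^ (n + 1)" and "Q = (1 + lam) ^ (n + 1)"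
  have "P > 0"
    unfolding P_def using assms by simp
  have "P / mu = Q / lam"
    using assms(3) by (simp add: fn_def P_def Q_def)
  then have "lam = Q * mu / P"
    using assms(1,2) \<open>P > 0\<close> by (simp add: field_simps)
  also have "Q = ((1 + lam) / (1 + mu)) ^ (n + 1) * P"
    unfolding P_def Q_def using assms by (simp add: power_divide)
  finally show ?thesis
    using \<open>P > 0\<close> by simp
qed

lemma mult_recip_power_sum_eq_one:
  assumes "1 < t" "1 + lam = t * (1 + mu)" "lam = t ^ (n + 1) * mu"
  shows "lam * recip_power_sum n t = 1"
proof -
  have "t \<noteq> 0"
    using assms(1) by simp
  have "lam * (1 / t) ^ n = t * mu"
    using \<open>t \<noteq> 0\<close> by (simp add: assms(3) power_one_over)
  have "(t - 1) * (lam * recip_power_sum n t) = lam * (1 - (1 / t) ^ n)"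
    by (simp only: mult.left_commute[of "t - 1"] diff_one_mult_recip_power_sum[OF \<open>t \<noteq> 0\<close>])
  also have "\<dots> = lam - t * mu"
    using \<open>lam * (1 / t) ^ n = t * mu\<close> by (simp add: right_diff_distrib)
  also have "\<dots> = (t - 1) * 1"
    using assms(2) by (simp add: algebra_simps)
  finally show ?thesis
    using assms(1) by simp
qed

lemma powr_interpolation_eq:
  fixes n j :: nat and t mu :: real
  assumes "0 < t" "0 < mu" "1 \<le> j"
  defines "a \<equiv> (real j - 1) / (real n + 1)"
  shows "(t ^ (n + 1) * mu) powr (1 - a) * mu powr a * t ^ (j - 1) = t ^ (n + 1) * mu"
proof -
  have exponent: "real (n + 1) * a = real (j - 1)"
    unfolding a_def using assms(3) by (simp add: of_nat_diff add.commute)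
  have "(t ^ (n + 1)) powr a = (t powr real (n + 1)) powr a"
    by (simp only: powr_realpow[OF \<open>0 < t\<close>])
  also have "\<dots> = t ^ (j - 1)"
    unfolding powr_powr exponent by (rule powr_realpow[OF \<open>0 < t\<close>])
  finally have "mu powr a * t ^ (j - 1) = (t ^ (n + 1) * mu) powr a"
    by (simp add: powr_mult)
  then have "(t ^ (n + 1) * mu) powr (1 - a) * mu powr a * t ^ (j - 1)
      = (t ^ (n + 1) * mu) powr (1 - a) * (t ^ (n + 1) * mu) powr a"
    by (simp add: mult.assoc)
  also have "\<dots> = t ^ (n + 1) * mu"
    using assms(1,2) by (simp add: powr_add[symmetric])
  finally show ?thesis .
qed

lemma lam_reg_parametrization:
  assumes n: "1 \<le> n" and j: "1 \<le> j" and lam: "1 / real n < lam"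
  obtains t where "1 < t" "lam * recip_power_sum n t = 1" "lam_reg n j lam * t ^ (j - 1) = lam"
proof
  define mu where "mu = mu_reg n lam"
  have mu: "0 < mu" "mu < 1 / real n" "fn n mu = fn n lam"
    using mu_reg_bounds[OF n lam] unfolding mu_def by auto
  have "0 < 1 / real n"
    using n by simp
  then have "0 < lam"
    using lam by linarith
  define t where "t = (1 + lam) / (1 + mu)"
  show "1 < t"
    unfolding t_def using mu lam by simp
  have lam_mu: "lam = t ^ (n + 1) * mu"
    unfolding t_def using fn_eq_imp_power_ratio[OF \<open>0 < mu\<close> \<open>0 < lam\<close> mu(3)] .
  moreover have "1 + lam = t * (1 + mu)"
    unfolding t_def using mu by simp
  ultimately show "lam * recip_power_sum n t = 1"
    using \<open>1 < t\<close> by (intro mult_recip_power_sum_eq_one)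
  show "lam_reg n j lam * t ^ (j - 1) = lam"
    unfolding lam_reg_def mu_def[symmetric] unfolding lam_mu
    using powr_interpolation_eq[of t mu j n] \<open>1 < t\<close> mu j by simp
qed

section \<open>The quotients \<open>(t\<^sup>m - 1) / (t - 1)\<close>\<close>

text \<open>Written as finite sums, so that the quotient is defined and continuous at \<open>t = 1\<close>.\<close>

definition powi_quot :: "int \<Rightarrow> real \<Rightarrow> real" where
  "powi_quot m t = (if 0 \<le> m then (\<Sum>i<nat m. t ^ i) else - (\<Sum>i=1..nat (- m). (1 / t) ^ i))"

lemma diff_one_mult_powi_quot:
  assumes "t \<noteq> 0"
  shows "(t - 1) * powi_quot m t = t powi m - 1"
proof (cases "0 \<le> m")
  case True
  then show ?thesis
    using power_int_of_nat[of t "nat m"] by (simp add: powi_quot_def power_diff_1_eq mult.commute)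
next
  case False
  have "(t - 1) * (\<Sum>i=1..k. (1 / t) ^ i) = 1 - (1 / t) ^ k" for k
    using diff_one_mult_recip_power_sum[OF assms, of k] by (simp add: recip_power_sum_def)
  moreover have "t powi m = (1 / t) ^ nat (- m)"
    using False by (simp add: power_int_def inverse_eq_divide power_one_over)
  ultimately show ?thesis
    using False by (simp add: powi_quot_def)
qed

lemma powi_quot_one [simp]: "powi_quot m 1 = of_int m"
  by (simp add: powi_quot_def)

lemma mono_on_powi_quot: "mono_on {0<..} (powi_quot m)"
proof (rule mono_onI)
  fix s t :: real assume "s \<in> {0<..}" "s \<le> t"
  then have "0 < s" "1 / t \<le> 1 / s"
    by (auto simp: frac_le)
  with \<open>s \<le> t\<close> show "powi_quot m s \<le> powi_quot m t"
    unfolding powi_quot_def by (auto intro!: sum_mono power_mono)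
qed

lemma strict_mono_on_powi_quot:
  assumes "m < 0"
  shows "strict_mono_on {0<..} (powi_quot m)"
proof (rule strict_mono_onI)
  fix s t :: real assume "s \<in> {0<..}" "s < t"
  then have "0 < s" "1 / t < 1 / s"
    by (auto simp: frac_less2)
  with \<open>s < t\<close> assms show "powi_quot m s < powi_quot m t"
    unfolding powi_quot_def by (auto intro!: sum_strict_mono power_strict_mono)
qed

lemma continuous_on_powi_quot: "continuous_on {0<..} (powi_quot m)"
  unfolding powi_quot_def[abs_def] by (cases "0 \<le> m") (auto intro!: continuous_intros)

lemma powi_quot_ge_one:
  assumes "1 \<le> m" "0 \<le> t"
  shows "1 \<le> powi_quot m t"
proof -
  have "t ^ 0 \<le> (\<Sum>i<nat m. t ^ i)"
    using assms by (intro member_le_sum) auto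
  then show ?thesis
    using assms by (simp add: powi_quot_def)
qed

lemma powi_quot_lower_bound:
  assumes "1 \<le> t" "- int N \<le> m"
  shows "- (real N / t) \<le> powi_quot m t"
proof (cases "0 \<le> m")
  case True
  have "0 \<le> (\<Sum>i<nat m. t ^ i)"
    using assms by (intro sum_nonneg) auto
  moreover have "0 \<le> real N / t"
    using assms by simp
  ultimately show ?thesis
    using True by (simp add: powi_quot_def)
next
  case False
  have "(\<Sum>i=1..nat (- m). (1 / t) ^ i) \<le> (\<Sum>i=1..nat (- m). 1 / t)"
    using assms by (intro sum_mono) (auto simp: power_le_one_iff power_decreasing[of 1, simplified])
  also have "\<dots> = (- of_int m) / t"
    using False by simp
  also have "\<dots> \<le> real N / t"
    using assms by (intro divide_right_mono) auto
  finally show ?thesis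
    using False by (simp add: powi_quot_def)
qed

definition gap_quot :: "nat \<Rightarrow> nat \<Rightarrow> real \<Rightarrow> real" where
  "gap_quot n j t = (\<Sum>k=1..n. powi_quot (int j - 1 - int k) t)"

lemma power_mult_recip_power_sum_minus:
  assumes "t \<noteq> 0" "1 \<le> j"
  shows "t ^ (j - 1) * recip_power_sum n t - real n = (t - 1) * gap_quot n j t"
proof -
  have termwise: "(t - 1) * powi_quot (int j - 1 - int k) t = t ^ (j - 1) * (1 / t) ^ k - 1" for k
  proof -
    have "t powi (int j - 1 - int k) = t powi (int (j - 1) - int k)"
      using assms(2) by (simp add: of_nat_diff)
    also have "\<dots> = t powi int (j - 1) / t powi int k"
      by (rule power_int_diff) (simp add: assms(1))
    also have "\<dots> = t ^ (j - 1) * (1 / t) ^ k"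
      by (simp add: power_one_over)
    finally show ?thesis
      by (simp only: diff_one_mult_powi_quot[OF assms(1)])
  qed
  have "(t - 1) * gap_quot n j t = (\<Sum>k=1..n. t ^ (j - 1) * (1 / t) ^ k - 1)"
    unfolding gap_quot_def sum_distrib_left termwise ..
  then show ?thesis
    by (simp add: recip_power_sum_def sum_distrib_left sum_subtractf)
qed

lemma gap_quot_one: "2 * gap_quot n j 1 = real n * (2 * real j - 3 - real n)"
proof -
  have "gap_quot n j 1 = (\<Sum>k=1..n. (real j - 1) - real k)"
    unfolding gap_quot_def by (intro sum.cong) auto
  also have "\<dots> = real n * (real j - 1) - (\<Sum>k=1..n. real k)"
    by (simp add: sum_subtractf)
  finally show ?thesis
    using double_gauss_sum_from_Suc_0[of n, where 'a = real] by (simp add: algebra_simps)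
qed

lemma mono_on_gap_quot: "mono_on {0<..} (gap_quot n j)"
  unfolding gap_quot_def[abs_def]
  by (intro mono_onI sum_mono mono_onD[OF mono_on_powi_quot]) auto

lemma strict_mono_on_gap_quot:
  assumes "1 \<le> n" "j \<le> n"
  shows "strict_mono_on {0<..} (gap_quot n j)"
proof (rule strict_mono_onI)
  fix s t :: real assume st: "s \<in> {0<..}" "t \<in> {0<..}" "s < t"
  show "gap_quot n j s < gap_quot n j t"
    unfolding gap_quot_def
  proof (rule sum_strict_mono_ex1)
    show "\<forall>k\<in>{1..n}. powi_quot (int j - 1 - int k) s \<le> powi_quot (int j - 1 - int k) t"
      using mono_onD[OF mono_on_powi_quot] st by auto
    show "\<exists>k\<in>{1..n}. powi_quot (int j - 1 - int k) s < powi_quot (int j - 1 - int k) t"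
      using strict_mono_onD[OF strict_mono_on_powi_quot] st assms by (intro bexI[of _ n]) auto
  qed simp
qed

lemma continuous_on_gap_quot: "continuous_on {0<..} (gap_quot n j)"
  unfolding gap_quot_def[abs_def]
  by (intro continuous_on_sum continuous_on_powi_quot)

lemma gap_quot_lower_bound:
  assumes "1 \<le> n" "3 \<le> j" "1 \<le> t"
  shows "1 - real n * real n / t \<le> gap_quot n j t"
proof -
  have "gap_quot n j t = powi_quot (int j - 2) t + (\<Sum>k=2..n. powi_quot (int j - 1 - int k) t)"
    unfolding gap_quot_def using assms(1) by (simp add: sum.atLeast_Suc_atMost numeral_2_eq_2)
  moreover have "1 \<le> powi_quot (int j - 2) t"
    using assms by (intro powi_quot_ge_one) auto
  moreover have "real (card {2..n}) * (- (real n / t)) \<le> (\<Sum>k=2..n. powi_quot (int j - 1 - int k) t)"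
    using assms by (intro sum_bounded_below powi_quot_lower_bound) auto
  moreover have "real n * (- (real n / t)) \<le> real (card {2..n}) * (- (real n / t))"
    using assms by (intro mult_right_mono_neg) auto
  ultimately show ?thesis
    by simp
qed

section \<open>The sign of \<open>1 / n - lam_reg n j \<lambda>\<close>\<close>

lemma sgn_diff_strict_mono_on:
  fixes f :: "real \<Rightarrow> real"
  assumes "strict_mono_on S f" "x \<in> S" "y \<in> S"
  shows "sgn (f x - f y) = sgn (x - y)"
  using strict_mono_onD[OF assms(1)] assms(2,3) by (cases x y rule: linorder_cases) auto

lemma lam_reg_sign_parametrization:
  assumes n: "1 \<le> n" and j: "1 \<le> j" and lam: "1 / real n < lam"
  obtains t where "1 < t" "lam * recip_power_sum n t = 1"
    "sgn (1 / real n - lam_reg n j lam) = sgn (gap_quot n j t)"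
proof -
  obtain t where t: "1 < t" "lam * recip_power_sum n t = 1" "lam_reg n j lam * t ^ (j - 1) = lam"
    using lam_reg_parametrization[OF assms] .
  have "0 < 1 / real n"
    using n by simp
  then have "0 < lam"
    using lam by linarith
  have "real n * t ^ (j - 1) * (1 / real n - lam_reg n j lam) = t ^ (j - 1) - real n * lam"
    using n t(3) by (simp add: algebra_simps)
  also have "\<dots> = lam * (t ^ (j - 1) * recip_power_sum n t - real n)"
    using t(2) by (simp add: algebra_simps)
  also have "\<dots> = lam * (t - 1) * gap_quot n j t"
    using power_mult_recip_power_sum_minus[of t j n] t(1) j by simp
  finally have "sgn (real n * t ^ (j - 1)) * sgn (1 / real n - lam_reg n j lam)
      = sgn (lam * (t - 1)) * sgn (gap_quot n j t)"
    by (simp only: sgn_mult[symmetric])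
  then have "sgn (1 / real n - lam_reg n j lam) = sgn (gap_quot n j t)"
    using n t(1) \<open>0 < lam\<close> by simp
  with t(1,2) show ?thesis
    using that by blast
qed

lemma lam_reg_less_inverse_n:
  assumes n: "1 \<le> n" and j: "3 \<le> j" "n \<le> 2 * j - 3" and lam: "1 / real n < lam"
  shows "lam_reg n j lam < 1 / real n"
proof -
  obtain t where t: "1 < t" "sgn (1 / real n - lam_reg n j lam) = sgn (gap_quot n j t)"
    using lam_reg_sign_parametrization[OF n _ lam, of j] j by auto
  have "0 < gap_quot n j t"
  proof (cases "j \<le> n")
    case True
    have "n + 3 \<le> 2 * j"
      using j by simp
    then have "0 \<le> real n * (2 * real j - 3 - real n)"
      by (intro mult_nonneg_nonneg) auto
    then have "0 \<le> gap_quot n j 1"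
      using gap_quot_one[of n j] by simp
    also have "\<dots> < gap_quot n j t"
      using strict_mono_onD[OF strict_mono_on_gap_quot[OF n True]] t(1) by simp
    finally show ?thesis .
  next
    case False
    then have "real n + 3 < 2 * real j"
      using j by linarith
    then have "0 < real n * (2 * real j - 3 - real n)"
      using n by (intro mult_pos_pos) auto
    then have "0 < gap_quot n j 1"
      using gap_quot_one[of n j] by simp
    also have "\<dots> \<le> gap_quot n j t"
      using mono_onD[OF mono_on_gap_quot] t(1) by simp
    finally show ?thesis .
  qed
  then show ?thesis
    using t(2) by (simp add: sgn_1_pos)
qed

lemma lam_reg_at_n_less:
  assumes n: "2 \<le> n" and j: "3 \<le> j"
  shows "lam_reg n j (real n) < 1 / real n"
proof -
  have "1 / real n \<le> 1"
    using n by simp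
  then have "1 / real n < real n"
    using n by linarith
  then obtain t where t: "1 < t" "real n * recip_power_sum n t = 1"
    "lam_reg n j (real n) * t ^ (j - 1) = real n"
    using lam_reg_parametrization[of n j "real n"] n j by auto
  have "recip_power_sum n t = inverse (real n)"
    using t(2) n by (simp add: field_simps)
  then have "inverse t < inverse (real n)"
    using recip_power_sum_gt_inverse[of t n] t(1) n by (simp add: inverse_eq_divide)
  then have "real n < t"
    using t(1) n by simp
  have "real n * real n < t ^ 2"
    using \<open>real n < t\<close> n by (simp add: power2_eq_square mult_strict_mono)
  also have "\<dots> \<le> t ^ (j - 1)"
    using t(1) j by (intro power_increasing) auto
  finally have "(real n * lam_reg n j (real n)) * t ^ (j - 1) < t ^ (j - 1)"
    using t(3) by (simp add: mult.assoc)
  then have "real n * lam_reg n j (real n) < 1"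
    using t(1) by (simp add: mult_less_cancel_right2)
  then show ?thesis
    using n by (simp add: field_simps)
qed

lemma gap_quot_root:
  assumes n: "1 \<le> n" and j: "3 \<le> j" "2 * j - 2 \<le> n"
  obtains tt where "1 < tt" "gap_quot n j tt = 0"
proof -
  have "real n + 3 > 2 * real j"
    using j by linarith
  then have "real n * (2 * real j - 3 - real n) < 0"
    using n by (intro mult_pos_neg) auto
  then have "gap_quot n j 1 < 0"
    using gap_quot_one[of n j] by simp
  define T where "T = real n * real n + 1"
  have "1 \<le> T" "0 < T"
    unfolding T_def by (simp_all add: add_nonneg_pos)
  then have "real n * real n / T < 1"
    unfolding T_def by (simp add: divide_less_eq)
  then have "0 < gap_quot n j T"
    using gap_quot_lower_bound[OF n j(1) \<open>1 \<le> T\<close>] by linarith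
  moreover have "continuous_on {1..T} (gap_quot n j)"
    by (rule continuous_on_subset[OF continuous_on_gap_quot]) auto
  ultimately obtain tt where "1 \<le> tt" "gap_quot n j tt = 0"
    using IVT'[of "gap_quot n j" 1 0 T] \<open>gap_quot n j 1 < 0\<close> \<open>1 \<le> T\<close> by force
  moreover have "tt \<noteq> 1"
    using \<open>gap_quot n j 1 < 0\<close> \<open>gap_quot n j tt = 0\<close> by auto
  ultimately show ?thesis
    using that by force
qed

lemma lam_reg_sign_threshold:
  assumes j: "3 \<le> j" "2 * j - 2 \<le> n"
  obtains lt where "1 / real n < lt"
    "\<And>lam. 1 / real n < lam \<Longrightarrow> sgn (1 / real n - lam_reg n j lam) = sgn (lam - lt)"
proof -
  have n: "1 \<le> n" "j \<le> n"
    using j by auto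
  obtain tt where tt: "1 < tt" "gap_quot n j tt = 0"
    using gap_quot_root[OF n(1) j] .
  define lt where "lt = 1 / recip_power_sum n tt"
  have mono: "strict_mono_on {0<..} (\<lambda>t. 1 / recip_power_sum n t)"
    using strict_mono_on_inverse_recip_power_sum[OF n(1)] .
  have "1 / real n < lt"
    using strict_mono_onD[OF mono, of 1 tt] tt(1) unfolding lt_def by simp
  moreover have "sgn (1 / real n - lam_reg n j lam) = sgn (lam - lt)" if lam: "1 / real n < lam" for lam
  proof -
    obtain t where t: "1 < t" "lam * recip_power_sum n t = 1"
      "sgn (1 / real n - lam_reg n j lam) = sgn (gap_quot n j t)"
      using lam_reg_sign_parametrization[OF n(1) _ lam, of j] j by auto
    have "lam = 1 / recip_power_sum n t"
      using t(2) by (cases "recip_power_sum n t = 0") (auto simp: eq_divide_eq)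
    have "sgn (gap_quot n j t) = sgn (gap_quot n j t - gap_quot n j tt)"
      using tt(2) by simp
    also have "\<dots> = sgn (t - tt)"
      using sgn_diff_strict_mono_on[OF strict_mono_on_gap_quot[OF n]] t(1) tt(1) by simp
    also have "\<dots> = sgn (lam - lt)"
      unfolding \<open>lam = 1 / recip_power_sum n t\<close> lt_def
      using sgn_diff_strict_mono_on[OF mono] t(1) tt(1) by simp
    finally show ?thesis
      using t(3) by simp
  qed
  ultimately show ?thesis
    using that by blast
qed

lemma lam_reg_crossing:
  assumes j: "3 \<le> j" "2 * j - 2 \<le> n"
  obtains lt where "1 / real n < lt" "lt < real n"
    "\<And>x. 1 / real n < x \<Longrightarrow> x < lt \<Longrightarrow> 1 / real n < lam_reg n j x"
    "lam_reg n j lt = 1 / real n"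
    "\<And>x. lt < x \<Longrightarrow> lam_reg n j x < 1 / real n"
proof -
  obtain lt where lt: "1 / real n < lt"
    and sign: "\<And>lam. 1 / real n < lam \<Longrightarrow> sgn (1 / real n - lam_reg n j lam) = sgn (lam - lt)"
    using lam_reg_sign_threshold[OF j] by blast
  have "lam_reg n j (real n) < 1 / real n"
    using lam_reg_at_n_less j by simp
  moreover have "1 / real n < real n"
    using j by (simp add: divide_less_eq less_1_mult)
  ultimately have "lt < real n"
    using sign[of "real n"] by (simp add: sgn_1_pos)
  moreover have "1 / real n < lam_reg n j x" if "1 / real n < x" "x < lt" for x
    using sign[of x] that by (simp add: sgn_1_neg)
  moreover have "lam_reg n j lt = 1 / real n"
    using sign[of lt] lt by (simp add: sgn_eq_0_iff)
  moreover have "lam_reg n j x < 1 / real n" if "lt < x" for x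
    using sign[of x] lt that by (simp add: sgn_1_pos)
  ultimately show ?thesis
    using that lt by blast
qed

lemma lam_reg_ext_less_inverse_n:
  assumes "3 \<le> j" "1 \<le> n" "\<And>x. a < x \<Longrightarrow> lam_reg n j x < 1 / real n" "ereal a < L"
  shows "lam_reg_ext n j L < ereal (1 / real n)"
  using assms by (cases L) (auto simp: lam_reg_ext_def)

theorem theorem2p5:
  fixes n j :: nat
  assumes "j \<ge> 3" and "n + 2 \<ge> j"
  shows "(n \<ge> 2 * j - 2 \<longrightarrow>
            (\<exists>lt::real. 1 / real n < lt \<and> lt < real n
               \<and> (\<forall>x::real. 1 / real n < x \<and> x < lt \<longrightarrow> lam_reg_ext n j (ereal x) > ereal (1 / real n))
               \<and> lam_reg_ext n j (ereal (1 / real n)) = ereal (1 / real n)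
               \<and> lam_reg_ext n j (ereal lt) = ereal (1 / real n)
               \<and> (\<forall>L::ereal. ereal lt < L \<longrightarrow> lam_reg_ext n j L < ereal (1 / real n))))
       \<and> (n \<le> 2 * j - 3 \<longrightarrow>
            (\<forall>L::ereal. ereal (1 / real n) < L \<longrightarrow> lam_reg_ext n j L < ereal (1 / real n)))"
proof (intro conjI impI allI)
  have "1 \<le> n"
    using assms by simp
  show "\<exists>lt. 1 / real n < lt \<and> lt < real n
      \<and> (\<forall>x. 1 / real n < x \<and> x < lt \<longrightarrow> lam_reg_ext n j (ereal x) > ereal (1 / real n))
      \<and> lam_reg_ext n j (ereal (1 / real n)) = ereal (1 / real n)
      \<and> lam_reg_ext n j (ereal lt) = ereal (1 / real n)
      \<and> (\<forall>L. ereal lt < L \<longrightarrow> lam_reg_ext n j L < ereal (1 / real n))"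
    if large: "2 * j - 2 \<le> n"
  proof -
    obtain lt where lt: "1 / real n < lt" "lt < real n"
      "\<And>x. 1 / real n < x \<Longrightarrow> x < lt \<Longrightarrow> 1 / real n < lam_reg n j x"
      "lam_reg n j lt = 1 / real n" "\<And>x. lt < x \<Longrightarrow> lam_reg n j x < 1 / real n"
      using lam_reg_crossing[OF assms(1) large] by blast
    show ?thesis
      using lt lam_reg_at_inverse_n[OF \<open>1 \<le> n\<close>] lam_reg_ext_less_inverse_n[OF assms(1) \<open>1 \<le> n\<close> lt(5)]
      by (intro exI[of _ lt]) (auto simp: lam_reg_ext_def)
  qed
  show "lam_reg_ext n j L < ereal (1 / real n)" if "n \<le> 2 * j - 3" "ereal (1 / real n) < L" for L
    using lam_reg_ext_less_inverse_n[OF assms(1) \<open>1 \<le> n\<close> _ that(2)]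
      lam_reg_less_inverse_n[OF \<open>1 \<le> n\<close> assms(1) that(1)] by blast
qed

end
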